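(* The set $\mathcal C=(0,\infty)\times\mathbb R$ is an invariant control set for the system (N).
   Context: Fix $\delta\in\mathbb R$, $\gamma>0$, $D>0$. System (N): $d\xi=-\xi^4\eta\,dt$, $d\eta=(\delta\xi+2\xi^3\eta^2-\gamma\xi^4\eta)dt+\sqrt{2D}\,dW$. Associated control problem: $\dot z_1=-z_1^4z_2$, $\dot z_2=\delta z_1+2z_1^3z_2^2-\gamma z_1^4z_2+\sqrt{2D}\,u(t)$ with smooth admissible controls $u:[0,\infty)\to\mathbb R$. For $(\xi,\eta)\in\mathbb R^2$ and $T>0$, $\mathcal O(T,\xi,\eta)$ is the set of points $(z_1(T),z_2(T))$ reachable at time $T$ by a solution of the control problem starting from $(\xi,\eta)$, and $\mathcal O(\xi,\eta)=\bigcup_{T>0}\mathcal O(T,\xi,\eta)$. A nonempty set $\mathcal C\subset\mathbb R^2$ is an invariant control set for (N) if $\overline{\mathcal C}=\overline{\mathcal O(\xi,\eta)}$ for all $(\xi,\eta)\in\mathcal C$ and $\mathcal C$ is maximal with respect to inclusion among sets with this property. *)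

theory Defs
  imports "HOL-Analysis.Analysis"
begin

definition smooth_on_real :: "real set \<Rightarrow> (real \<Rightarrow> real) \<Rightarrow> bool" where
  "smooth_on_real S u \<longleftrightarrow>
     (\<exists>Df :: nat \<Rightarrow> real \<Rightarrow> real. Df 0 = u \<and>
        (\<forall>k. \<forall>t\<in>S. (Df k has_real_derivative Df (Suc k) t) (at t within S)))"

definition admissible_control :: "(real \<Rightarrow> real) \<Rightarrow> bool" where
  "admissible_control u \<longleftrightarrow> smooth_on_real {0..} u"

definition ctrl_solution ::
  "real \<Rightarrow> real \<Rightarrow> real \<Rightarrow> (real \<Rightarrow> real) \<Rightarrow> real \<Rightarrow> (real \<Rightarrow> real \<times> real) \<Rightarrow> bool" where
  "ctrl_solution \<delta> \<gamma> D u T z \<longleftrightarrow>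
     (\<forall>t\<in>{0..T}.
        ((\<lambda>s. fst (z s)) has_real_derivative
            (- (fst (z t) ^ 4 * snd (z t)))) (at t within {0..T}) \<and>
        ((\<lambda>s. snd (z s)) has_real_derivative
            (\<delta> * fst (z t) + 2 * (fst (z t)) ^ 3 * (snd (z t)) ^ 2
             - \<gamma> * (fst (z t)) ^ 4 * snd (z t) + sqrt (2 * D) * u t)) (at t within {0..T}))"

definition reach_time :: "real \<Rightarrow> real \<Rightarrow> real \<Rightarrow> real \<Rightarrow> real \<times> real \<Rightarrow> (real \<times> real) set" where
  "reach_time \<delta> \<gamma> D T p =
     {z T | z u. admissible_control u \<and> z 0 = p \<and> ctrl_solution \<delta> \<gamma> D u T z}"

definition reach :: "real \<Rightarrow> real \<Rightarrow> real \<Rightarrow> real \<times> real \<Rightarrow> (real \<times> real) set" where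
  "reach \<delta> \<gamma> D p = (\<Union>T\<in>{0<..}. reach_time \<delta> \<gamma> D T p)"

definition control_set_property :: "real \<Rightarrow> real \<Rightarrow> real \<Rightarrow> (real \<times> real) set \<Rightarrow> bool" where
  "control_set_property \<delta> \<gamma> D C \<longleftrightarrow>
     C \<noteq> {} \<and> (\<forall>p\<in>C. closure C = closure (reach \<delta> \<gamma> D p))"

definition invariant_control_set :: "real \<Rightarrow> real \<Rightarrow> real \<Rightarrow> (real \<times> real) set \<Rightarrow> bool" where
  "invariant_control_set \<delta> \<gamma> D C \<longleftrightarrow>
     control_set_property \<delta> \<gamma> D C \<and>
     (\<forall>C'. C \<subseteq> C' \<and> control_set_property \<delta> \<gamma> D C' \<longrightarrow> C' = C)"

end

theory Submission
  imports Defs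
begin

(* Write C = (0,\<infinity>) \<times> \<real>.
   (1) Invariance of the sign of z1: the first equation is linear in z1,
       z1' = a(t) z1 with a = -z1^3 z2, hence z1(T) = z1(0) exp(\<integral> a); so the half
       plane C and the axis {0} \<times> \<real> are both invariant.
   (2) Exact controllability inside C: the system is flat with flat output
       q = ln z1. Given any function q, the curve z1 = exp q, z2 = -q' exp(-3q)
       satisfies the first equation, and the second one is solved by choosing u
       from z2'. Taking q a cubic Hermite interpolant of the boundary data yields a
       trajectory joining any two points of C in time 1; the resulting control is
       an exp-polynomial expression, and such expressions are smooth.
   Hence the reachable set from every point of C is exactly C, which gives the
   control-set property. For maximality, a larger control set C' would contain a
   point on the axis z1 = 0, from which only the axis is reachable, while
   closure C' must contain (1,0). *)

section \<open>The first component never changes sign\<close>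

lemma linear_scalar_ode_solution:
  fixes x a :: "real \<Rightarrow> real"
  assumes T: "T \<ge> 0" and a_cont: "continuous_on {0..T} a"
    and x_deriv: "\<And>t. t \<in> {0..T} \<Longrightarrow> (x has_real_derivative a t * x t) (at t within {0..T})"
  shows "x T = x 0 * exp (integral {0..T} a)"
proof -
  define A where "A = (\<lambda>t. integral {0..t} a)"
  have A_deriv: "(A has_real_derivative a t) (at t within {0..T})" if "t \<in> {0..T}" for t
    unfolding A_def using integral_has_real_derivative[OF a_cont] that by blast
  define g where "g = (\<lambda>t. x t * exp (- A t))"
  have "(g has_real_derivative 0) (at t within {0..T})" if t: "t \<in> {0..T}" for t
  proof -
    have "(g has_real_derivative (a t * x t) * exp (- A t) + x t * (exp (- A t) * - a t))
            (at t within {0..T})"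
      unfolding g_def using x_deriv[OF t] A_deriv[OF t] by (auto intro!: derivative_eq_intros)
    then show ?thesis by (simp add: algebra_simps)
  qed
  then obtain c where "\<forall>t\<in>{0..T}. g t = c"
    using has_field_derivative_zero_constant[of "{0..T}" g] by auto
  then have "g T = g 0" using T by auto
  then have "x T * exp (- A T) = x 0" by (simp add: g_def A_def)
  then show ?thesis by (simp add: A_def exp_minus field_simps)
qed

lemma ctrl_solution_fst_factor:
  assumes sol: "ctrl_solution \<delta> \<gamma> D u T z" and T: "T \<ge> 0"
  shows "\<exists>k. fst (z T) = fst (z 0) * exp k"
proof -
  define x where "x = (\<lambda>s. fst (z s))"
  define y where "y = (\<lambda>s. snd (z s))"
  have x_deriv: "(x has_real_derivative -(x t ^ 4 * y t)) (at t within {0..T})"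
    and y_diff: "\<exists>d. (y has_real_derivative d) (at t within {0..T})" if "t \<in> {0..T}" for t
    using sol that unfolding ctrl_solution_def x_def y_def by blast+
  have "continuous_on {0..T} x" "continuous_on {0..T} y"
    using x_deriv y_diff DERIV_continuous continuous_on_eq_continuous_within by blast+
  then have a_cont: "continuous_on {0..T} (\<lambda>t. - (x t ^ 3 * y t))"
    by (intro continuous_intros)
  have "x T = x 0 * exp (integral {0..T} (\<lambda>t. - (x t ^ 3 * y t)))"
  proof (rule linear_scalar_ode_solution[OF T a_cont])
    fix t assume "t \<in> {0..T}"
    then show "(x has_real_derivative - (x t ^ 3 * y t) * x t) (at t within {0..T})"
      using x_deriv by (simp add: power_numeral_reduce algebra_simps)
  qed
  then show ?thesis unfolding x_def by blast
qed

lemma reach_fst_factor: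
  assumes "q \<in> reach \<delta> \<gamma> D p"
  shows "\<exists>k. fst q = fst p * exp k"
proof -
  from assms obtain T z u where "T > 0" "q = z T" "z 0 = p" "ctrl_solution \<delta> \<gamma> D u T z"
    unfolding reach_def reach_time_def by auto
  then show ?thesis using ctrl_solution_fst_factor[of \<delta> \<gamma> D u T z] by auto
qed

section \<open>Exp-polynomial functions are smooth\<close>

text \<open>It is closed under
  differentiation, so all its members are C-infinity.\<close>
inductive_set exp_poly :: "(real \<Rightarrow> real) set" where
  const: "(\<lambda>t. c) \<in> exp_poly"
| ident: "(\<lambda>t. t) \<in> exp_poly"
| add: "f \<in> exp_poly \<Longrightarrow> g \<in> exp_poly \<Longrightarrow> (\<lambda>t. f t + g t) \<in> exp_poly"
| mult: "f \<in> exp_poly \<Longrightarrow> g \<in> exp_poly \<Longrightarrow> (\<lambda>t. f t * g t) \<in> exp_poly"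
| exp: "f \<in> exp_poly \<Longrightarrow> (\<lambda>t. exp (f t)) \<in> exp_poly"

lemma exp_poly_uminus: "f \<in> exp_poly \<Longrightarrow> (\<lambda>t. - f t) \<in> exp_poly"
  using exp_poly.mult[OF exp_poly.const[of "-1"]] by simp

lemma exp_poly_diff: "f \<in> exp_poly \<Longrightarrow> g \<in> exp_poly \<Longrightarrow> (\<lambda>t. f t - g t) \<in> exp_poly"
  using exp_poly.add[OF _ exp_poly_uminus] by simp

lemma exp_poly_divide: "f \<in> exp_poly \<Longrightarrow> (\<lambda>t. f t / c) \<in> exp_poly"
  using exp_poly.mult[OF _ exp_poly.const[of "inverse c"]] by (simp add: divide_inverse)

lemma exp_poly_power: "f \<in> exp_poly \<Longrightarrow> (\<lambda>t. f t ^ n) \<in> exp_poly"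
  by (induction n) (simp_all add: exp_poly.const exp_poly.mult)

lemmas exp_poly_intros =
  exp_poly.intros exp_poly_uminus exp_poly_diff exp_poly_divide exp_poly_power

lemma exp_poly_deriv:
  "f \<in> exp_poly \<Longrightarrow> \<exists>f'\<in>exp_poly. \<forall>t. (f has_real_derivative f' t) (at t)"
proof (induction rule: exp_poly.induct)
  case (const c)
  show ?case by (rule bexI[OF _ exp_poly.const[of 0]]) simp
next
  case ident
  show ?case by (rule bexI[OF _ exp_poly.const[of 1]]) simp
next
  case (add f g)
  then obtain f' g' where "f' \<in> exp_poly" "g' \<in> exp_poly"
    "\<forall>t. (f has_real_derivative f' t) (at t)" "\<forall>t. (g has_real_derivative g' t) (at t)" by blast
  then show ?case
    by (intro bexI[of _ "\<lambda>t. f' t + g' t"]) (auto intro: DERIV_add exp_poly.add)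
next
  case (mult f g)
  then obtain f' g' where "f' \<in> exp_poly" "g' \<in> exp_poly"
    "\<forall>t. (f has_real_derivative f' t) (at t)" "\<forall>t. (g has_real_derivative g' t) (at t)" by blast
  with mult.hyps show ?case
    by (intro bexI[of _ "\<lambda>t. f' t * g t + g' t * f t"]) (auto intro: DERIV_mult exp_poly_intros)
next
  case (exp f)
  then obtain f' where "f' \<in> exp_poly" "\<forall>t. (f has_real_derivative f' t) (at t)" by blast
  with exp.hyps show ?case
    by (intro bexI[of _ "\<lambda>t. exp (f t) * f' t"]) (auto intro: DERIV_fun_exp exp_poly_intros)
qed

lemma exp_poly_smooth:
  assumes "f \<in> exp_poly"
  shows "smooth_on_real S f"
proof -
  have "\<forall>g\<in>exp_poly. \<exists>g'. g' \<in> exp_poly \<and> (\<forall>t. (g has_real_derivative g' t) (at t))"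
    using exp_poly_deriv by blast
  from bchoice[OF this] obtain nx where nx: "\<And>g. g \<in> exp_poly \<Longrightarrow>
      nx g \<in> exp_poly \<and> (\<forall>t. (g has_real_derivative nx g t) (at t))"
    by blast
  define Df where "Df = (\<lambda>k. (nx ^^ k) f)"
  have Df_Suc: "Df (Suc k) = nx (Df k)" for k
    by (simp add: Df_def)
  have Df_mem: "Df k \<in> exp_poly" for k
  proof (induction k)
    case 0
    show ?case using assms by (simp add: Df_def)
  next
    case (Suc k)
    show ?case unfolding Df_Suc using nx[OF Suc.IH] by blast
  qed
  show ?thesis unfolding smooth_on_real_def
  proof (intro exI[of _ Df] conjI allI ballI)
    show "Df 0 = f" by (simp add: Df_def)
    fix k t
    have "(Df k has_real_derivative Df (Suc k) t) (at t)"
      unfolding Df_Suc using nx[OF Df_mem[of k]] by blast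
    then show "(Df k has_real_derivative Df (Suc k) t) (at t within S)"
      by (rule has_field_derivative_at_within)
  qed
qed

section \<open>Exact controllability inside the open half plane\<close>

text \<open>Flatness: any flat output q determines the trajectory z = (exp q, -q' exp(-3q))
  of the first equation; the second equation then defines the control.\<close>
lemma flat_trajectory:
  assumes D: "D > 0"
    and q_mem: "q \<in> exp_poly" "q1 \<in> exp_poly" "q2 \<in> exp_poly"
    and q_deriv: "\<And>t. (q has_real_derivative q1 t) (at t)"
    and q1_deriv: "\<And>t. (q1 has_real_derivative q2 t) (at t)"
  shows "\<exists>u. admissible_control u \<and>
           ctrl_solution \<delta> \<gamma> D u T (\<lambda>t. (exp (q t), - q1 t * exp (- 3 * q t)))"
proof -
  define x where "x = (\<lambda>t. exp (q t))"
  define y where "y = (\<lambda>t. - q1 t * exp (- 3 * q t))"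
  define y' where "y' = (\<lambda>t. (- q2 t + 3 * q1 t ^ 2) * exp (- 3 * q t))"
  define u where "u = (\<lambda>t. (y' t - \<delta> * x t - 2 * x t ^ 3 * y t ^ 2 + \<gamma> * x t ^ 4 * y t) / sqrt (2 * D))"
  have "(x has_real_derivative exp (q t) * q1 t) (at t)" for t
    unfolding x_def using q_deriv by (auto intro!: derivative_eq_intros)
  moreover have "exp (q t) * q1 t = - (x t ^ 4 * y t)" for t
  proof -
    have "exp (q t) ^ 4 * exp (- 3 * q t) = exp (q t)"
      by (simp add: exp_of_nat_mult[symmetric] exp_add[symmetric])
    then show ?thesis unfolding x_def y_def by (simp add: algebra_simps)
  qed
  ultimately have x_deriv: "(x has_real_derivative - (x t ^ 4 * y t)) (at t)" for t
    by metis
  have y_deriv: "(y has_real_derivative y' t) (at t)" for t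
    unfolding y_def y'_def using q_deriv q1_deriv
    by (auto intro!: derivative_eq_intros simp: algebra_simps power2_eq_square)
  have y'_eq: "y' t = \<delta> * x t + 2 * x t ^ 3 * y t ^ 2 - \<gamma> * x t ^ 4 * y t + sqrt (2 * D) * u t" for t
    using D by (simp add: u_def field_simps)
  have adm: "admissible_control u"
    unfolding admissible_control_def u_def y'_def x_def y_def
    by (intro exp_poly_smooth exp_poly_intros q_mem)
  have sol: "ctrl_solution \<delta> \<gamma> D u T (\<lambda>t. (x t, y t))"
    unfolding ctrl_solution_def fst_conv snd_conv
  proof (intro ballI conjI)
    fix t
    show "(x has_real_derivative - (x t ^ 4 * y t)) (at t within {0..T})"
      using x_deriv by (rule has_field_derivative_at_within)
    show "(y has_real_derivative \<delta> * x t + 2 * x t ^ 3 * y t ^ 2 - \<gamma> * x t ^ 4 * y t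
            + sqrt (2 * D) * u t) (at t within {0..T})"
      using y_deriv[of t] unfolding y'_eq by (rule has_field_derivative_at_within)
  qed
  show ?thesis
    by (intro exI[of _ u] conjI adm sol[unfolded x_def y_def])
qed

lemma cubic_hermite:
  fixes a0 b0 a1 b1 :: real
  obtains k0 k1 k2 k3 where
    "k0 = a0" "k1 = b0" "k0 + k1 + k2 + k3 = a1" "k1 + 2 * k2 + 3 * k3 = b1"
proof
  show "a0 + b0 + (3 * (a1 - a0 - b0) - (b1 - b0)) + ((b1 - b0) - 2 * (a1 - a0 - b0)) = a1"
    by simp
  show "b0 + 2 * (3 * (a1 - a0 - b0) - (b1 - b0)) + 3 * ((b1 - b0) - 2 * (a1 - a0 - b0)) = b1"
    by simp
qed simp_all

lemma flat_coordinates: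
  fixes v w :: real
  assumes "v > 0"
  shows "(v, w) = (exp (ln v), - (- (v ^ 3) * w) * exp (- 3 * ln v))"
proof -
  have "exp (3 * ln v) = v ^ 3" using exp_of_nat_mult[of 3 "ln v"] assms by simp
  then show ?thesis using assms by (simp add: exp_minus field_simps)
qed

lemma reach_half_plane:
  assumes D: "D > 0" and p1: "p1 > 0" and a: "a > 0"
  shows "(a, b) \<in> reach \<delta> \<gamma> D (p1, p2)"
proof -
  obtain k0 k1 k2 k3 where k: "k0 = ln p1" "k1 = - (p1 ^ 3) * p2"
      "k0 + k1 + k2 + k3 = ln a" "k1 + 2 * k2 + 3 * k3 = - (a ^ 3) * b"
    by (rule cubic_hermite)
  define q where "q = (\<lambda>t::real. k0 + k1 * t + k2 * t ^ 2 + k3 * t ^ 3)"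
  define q1 where "q1 = (\<lambda>t::real. k1 + 2 * k2 * t + 3 * k3 * t ^ 2)"
  define q2 where "q2 = (\<lambda>t::real. 2 * k2 + 6 * k3 * t)"
  define z where "z = (\<lambda>t. (exp (q t), - q1 t * exp (- 3 * q t)))"
  have control: "\<exists>u. admissible_control u \<and> ctrl_solution \<delta> \<gamma> D u 1 z"
    unfolding z_def
  proof (rule flat_trajectory[OF D])
    show "q \<in> exp_poly" "q1 \<in> exp_poly" "q2 \<in> exp_poly"
      unfolding q_def q1_def q2_def by (intro exp_poly_intros)+
    show "(q has_real_derivative q1 t) (at t)" "(q1 has_real_derivative q2 t) (at t)" for t
      unfolding q_def q1_def q2_def by (auto intro!: derivative_eq_intros simp: algebra_simps)
  qed
  have start: "z 0 = (p1, p2)"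
    using flat_coordinates[OF p1, of p2] by (simp add: z_def q_def q1_def k)
  have "q 1 = ln a" "q1 1 = - (a ^ 3) * b"
    using k by (simp_all add: q_def q1_def)
  then have target: "z 1 = (a, b)"
    using flat_coordinates[OF a, of b] by (simp add: z_def)
  show ?thesis
    using control start target unfolding reach_def reach_time_def by (intro UN_I[of 1]) (auto intro!: exI[of _ z])
qed

lemma reach_from_half_plane:
  assumes D: "D > 0" and p: "fst p > 0"
  shows "reach \<delta> \<gamma> D p = {0<..} \<times> UNIV"
proof
  show "reach \<delta> \<gamma> D p \<subseteq> {0<..} \<times> UNIV"
    using p by (auto dest!: reach_fst_factor)
  show "{0<..} \<times> UNIV \<subseteq> reach \<delta> \<gamma> D p"
    using reach_half_plane[OF D p, of _ _ \<delta> \<gamma> "snd p"] by auto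
qed

lemma reach_from_axis:
  assumes "fst p = 0"
  shows "closure (reach \<delta> \<gamma> D p) \<subseteq> {0} \<times> UNIV"
proof (rule closure_minimal)
  show "reach \<delta> \<gamma> D p \<subseteq> {0} \<times> UNIV"
    using assms by (auto dest!: reach_fst_factor)
qed (auto intro: closed_Times)

lemma closure_half_plane: "closure ({0<..} \<times> UNIV) = {0::real..} \<times> (UNIV :: real set)"
  by (simp add: closure_Times)

lemma half_plane_control_set:
  assumes "D > 0"
  shows "control_set_property \<delta> \<gamma> D ({0<..} \<times> UNIV)"
  unfolding control_set_property_def
proof (intro conjI ballI)
  show "{0<..} \<times> UNIV \<noteq> ({} :: (real \<times> real) set)" by auto
  fix p :: "real \<times> real"
  assume "p \<in> {0<..} \<times> UNIV"
  then show "closure ({0<..} \<times> UNIV) = closure (reach \<delta> \<gamma> D p)"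
    using reach_from_half_plane[OF assms, of p] by auto
qed

text \<open>A control set containing the half plane cannot contain a point of the axis,
  since the closure of its reachable set would have to contain (1,0).\<close>
lemma half_plane_maximal:
  assumes D: "D > 0" and sub: "{0<..} \<times> UNIV \<subseteq> C'"
    and C': "control_set_property \<delta> \<gamma> D C'"
  shows "C' = {0<..} \<times> UNIV"
proof
  have one: "(1, 0) \<in> C'" using sub by auto
  have closure_reach: "closure C' = closure (reach \<delta> \<gamma> D p)" if "p \<in> C'" for p
    using C' that unfolding control_set_property_def by blast
  have cl: "closure C' = {0..} \<times> UNIV"
    using closure_reach[OF one] reach_from_half_plane[OF D, of "(1, 0)"] closure_half_plane
    by simp
  show "C' \<subseteq> {0<..} \<times> UNIV"
  proof
    fix p assume pC: "p \<in> C'"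
    then have "p \<in> closure C'" using closure_subset by blast
    then have "fst p \<ge> 0" using cl by auto
    moreover have "fst p \<noteq> 0"
    proof
      assume "fst p = 0"
      moreover have "(1, 0) \<in> closure (reach \<delta> \<gamma> D p)"
        using closure_reach[OF pC] one closure_subset by blast
      ultimately show False using reach_from_axis[of p \<delta> \<gamma> D] by auto
    qed
    ultimately show "p \<in> {0<..} \<times> UNIV" by (cases p) auto
  qed
qed (rule sub)

theorem mainTheorem13:
  fixes \<delta> \<gamma> D :: real
  assumes "\<gamma> > 0" and "D > 0"
  shows "invariant_control_set \<delta> \<gamma> D ({0<..} \<times> UNIV)"
  unfolding invariant_control_set_def
  using half_plane_control_set[OF assms(2)] half_plane_maximal[OF assms(2)] by blast

end
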